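(* Let $G$ be a finite induced regular group of odd order. If $C_G(x)\neq \beta_G(x)\cup Z(G)$ for all $x\in G$, then $G/Z(G)$ is an elementary $p$-group for some prime $p$.
   Context: For a finite group $G$, $C_G(x)$ denotes the centralizer of $x\in G$ and $Z(G)$ the center; $\beta_G(x)=\{y\in G\mid C_G(y)=C_G(x)\}$. The non-centralizer graph $\Upsilon_G$ is the simple graph with vertex set $G$ in which two distinct vertices $x,y$ are adjacent iff $C_G(x)\neq C_G(y)$; the induced non-centralizer graph $\Upsilon_{G\setminus Z(G)}$ is its induced subgraph on $G\setminus Z(G)$. $G$ is called induced regular if $\Upsilon_{G\setminus Z(G)}$ is a regular graph. A group is called an elementary $p$-group if every non-identity element has order exactly $p$ (it need not be abelian). *)

theory Defs
  imports "HOL-Algebra.Algebra"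
begin

definition centralizer :: "('a, 'b) monoid_scheme \<Rightarrow> 'a \<Rightarrow> 'a set" where
  "centralizer G x = {y \<in> carrier G. x \<otimes>\<^bsub>G\<^esub> y = y \<otimes>\<^bsub>G\<^esub> x}"

definition center :: "('a, 'b) monoid_scheme \<Rightarrow> 'a set" where
  "center G = {z \<in> carrier G. \<forall>y \<in> carrier G. z \<otimes>\<^bsub>G\<^esub> y = y \<otimes>\<^bsub>G\<^esub> z}"

definition beta :: "('a, 'b) monoid_scheme \<Rightarrow> 'a \<Rightarrow> 'a set" where
  "beta G x = {y \<in> carrier G. centralizer G y = centralizer G x}"

definition nc_adj :: "('a, 'b) monoid_scheme \<Rightarrow> 'a \<Rightarrow> 'a \<Rightarrow> bool" where
  "nc_adj G x y \<longleftrightarrow> x \<noteq> y \<and> centralizer G x \<noteq> centralizer G y"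

text \<open>Degree of x in the induced non-centralizer graph on G minus Z(G).\<close>
definition induced_degree :: "('a, 'b) monoid_scheme \<Rightarrow> 'a \<Rightarrow> nat" where
  "induced_degree G x = card {y \<in> carrier G - center G. nc_adj G x y}"

definition induced_regular :: "('a, 'b) monoid_scheme \<Rightarrow> bool" where
  "induced_regular G \<longleftrightarrow> (\<exists>k. \<forall>x \<in> carrier G - center G. induced_degree G x = k)"

text \<open>Elementary p-group: every non-identity element has order exactly p (not necessarily abelian).\<close>
definition elementary_p_group :: "('a, 'b) monoid_scheme \<Rightarrow> nat \<Rightarrow> bool" where
  "elementary_p_group H p \<longleftrightarrow> Factorial_Ring.prime p \<and>
     (\<forall>a \<in> carrier H. a \<noteq> \<one>\<^bsub>H\<^esub> \<longrightarrow> group.ord H a = p)"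

end

theory Submission
  imports Defs
begin

(* Call m maximal if C(m) is maximal among the centralizers of non-central elements. For such m,
   beta(m) = Z(C(m)) - Z(G); since induced regularity means that all beta-classes of non-central
   elements have the same size, every such class has exactly |Z(C(m))| - |Z(G)| elements.
   In a group of odd order, y^2 in K forces y in K for a subgroup K, so for y outside Z(C(m))
   the translates S y and S y^-1 of a subset S of Z(C(m)) are disjoint, and a beta-class
   containing both has at least 2 |S| elements. Three such counts show:
   - some y in C(m) - Z(G) has C(y) not contained in C(m) (here C(x) ~= beta(x) Un Z(G) is used);
   - if y^q is central for such y and a prime q, then so is a^q for every a in Z(C(m)); hence
     |Z(C(m))| = q^s |Z(G)|, so q does not depend on m;
   - every g has central q-th power, for otherwise Z(C(m)) g and Z(C(m)) g^-1 would both lie in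
     beta(g), where m is maximal with C(g^q) contained in C(m). *)

context group
begin

lemma submonoid_nat_pow_closed: "submonoid H G \<Longrightarrow> x \<in> H \<Longrightarrow> x [^] (n::nat) \<in> H"
  by (induction n) (auto simp: submonoid_def)

lemma commute_inv:
  assumes "x \<in> carrier G" "a \<in> carrier G" "x \<otimes> a = a \<otimes> x"
  shows "x \<otimes> inv a = inv a \<otimes> x"
proof -
  have "x \<otimes> inv a = inv a \<otimes> (a \<otimes> x) \<otimes> inv a"
    using assms(1,2) by (simp add: m_assoc[symmetric])
  also have "\<dots> = inv a \<otimes> (x \<otimes> a) \<otimes> inv a"
    using assms(3) by simp
  also have "\<dots> = inv a \<otimes> x"
    using assms(1,2) by (simp add: m_assoc)
  finally show ?thesis .
qed

lemma centralizer_subset: "centralizer G x \<subseteq> carrier G"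
  by (auto simp: centralizer_def)

lemma mem_centralizer_self: "x \<in> carrier G \<Longrightarrow> x \<in> centralizer G x"
  by (auto simp: centralizer_def)

lemma mem_centralizer_commute: "y \<in> centralizer G x \<Longrightarrow> x \<otimes> y = y \<otimes> x"
  by (simp add: centralizer_def)

lemma mem_centralizer_sym:
  "x \<in> carrier G \<Longrightarrow> y \<in> carrier G \<Longrightarrow> y \<in> centralizer G x \<longleftrightarrow> x \<in> centralizer G y"
  by (auto simp: centralizer_def)

lemma subgroup_centralizer:
  assumes "x \<in> carrier G"
  shows "subgroup (centralizer G x) G"
proof (rule subgroupI)
  fix a b assume "a \<in> centralizer G x" "b \<in> centralizer G x"
  then show "a \<otimes> b \<in> centralizer G x"
    using assms by (simp add: centralizer_def) (metis m_assoc)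
next
  fix a assume "a \<in> centralizer G x"
  then show "inv a \<in> centralizer G x"
    using assms commute_inv by (simp add: centralizer_def)
qed (use assms mem_centralizer_self in \<open>auto simp: centralizer_def\<close>)

lemma centralizer_mult:
  assumes "x \<in> carrier G" "y \<in> carrier G"
  shows "centralizer G x \<inter> centralizer G y \<subseteq> centralizer G (x \<otimes> y)"
proof
  fix u assume u: "u \<in> centralizer G x \<inter> centralizer G y"
  then have "u \<in> carrier G" using centralizer_subset by blast
  then have "x \<otimes> y \<in> centralizer G u"
    using u assms mem_centralizer_sym subgroup.m_closed[OF subgroup_centralizer] by blast
  then show "u \<in> centralizer G (x \<otimes> y)"
    using \<open>u \<in> carrier G\<close> assms mem_centralizer_sym by blast
qed

lemma centralizer_pow: "x \<in> carrier G \<Longrightarrow> centralizer G x \<subseteq> centralizer G (x [^] (n::nat))"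
  unfolding centralizer_def using group_commutes_pow by blast

lemma centralizer_subset_inv: "x \<in> carrier G \<Longrightarrow> centralizer G x \<subseteq> centralizer G (inv x)"
proof
  fix u assume "x \<in> carrier G" "u \<in> centralizer G x"
  then show "u \<in> centralizer G (inv x)"
    using commute_inv[of u x] by (simp add: centralizer_def)
qed

lemma centralizer_inv: "x \<in> carrier G \<Longrightarrow> centralizer G (inv x) = centralizer G x"
  using centralizer_subset_inv[of x] centralizer_subset_inv[of "inv x"] by auto

lemma mem_center_iff: "z \<in> center G \<longleftrightarrow> z \<in> carrier G \<and> centralizer G z = carrier G"
  by (auto simp: center_def centralizer_def)

lemma center_subset: "center G \<subseteq> carrier G"
  by (auto simp: center_def)

lemma subgroup_center: "subgroup (center G) G"
proof (rule subgroupI)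
  fix a b assume "a \<in> center G" "b \<in> center G"
  then have "a \<otimes> b \<in> carrier G" "carrier G \<subseteq> centralizer G (a \<otimes> b)"
    using centralizer_mult[of a b] by (auto simp: mem_center_iff)
  then show "a \<otimes> b \<in> center G"
    using centralizer_subset by (auto simp: mem_center_iff)
next
  fix a assume "a \<in> center G"
  then show "inv a \<in> center G"
    by (simp add: mem_center_iff centralizer_inv)
qed (auto simp: center_def)

lemma normal_center: "center G \<lhd> G"
proof -
  have "x \<otimes> z \<otimes> inv x \<in> center G" if "x \<in> carrier G" "z \<in> center G" for x z
  proof -
    have "x \<otimes> z \<otimes> inv x = z \<otimes> x \<otimes> inv x"
      using that by (simp add: center_def)
    then show ?thesis
      using that center_subset by (auto simp: m_assoc)
  qed
  then show ?thesis
    using subgroup_center normal_inv_iff by blast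
qed

lemma centralizer_subset_mult_center:
  assumes "x \<in> carrier G" "z \<in> center G"
  shows "centralizer G x \<subseteq> centralizer G (x \<otimes> z)"
  using assms centralizer_mult[of x z] centralizer_subset by (auto simp: mem_center_iff)

lemma centralizer_mult_center:
  assumes "x \<in> carrier G" "z \<in> center G"
  shows "centralizer G (x \<otimes> z) = centralizer G x"
proof
  show "centralizer G x \<subseteq> centralizer G (x \<otimes> z)"
    using assms by (rule centralizer_subset_mult_center)
  have z: "z \<in> carrier G" "inv z \<in> center G"
    using assms(2) center_subset subgroup.m_inv_closed[OF subgroup_center] by auto
  then have "centralizer G (x \<otimes> z) \<subseteq> centralizer G (x \<otimes> z \<otimes> inv z)"
    using assms(1) centralizer_subset_mult_center by simp
  then show "centralizer G (x \<otimes> z) \<subseteq> centralizer G x"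
    using assms(1) z(1) by (simp add: m_assoc)
qed

lemma centralizer_mult_inter:
  assumes "a \<in> carrier G" "y \<in> carrier G"
  shows "centralizer G (a \<otimes> y) \<inter> centralizer G a = centralizer G y \<inter> centralizer G a"
proof -
  have "centralizer G (a \<otimes> y) \<inter> centralizer G a \<subseteq> centralizer G (inv a \<otimes> (a \<otimes> y))"
    using assms centralizer_mult[of "inv a" "a \<otimes> y"] centralizer_inv by blast
  also have "inv a \<otimes> (a \<otimes> y) = y"
    using assms by (simp add: m_assoc[symmetric])
  finally show ?thesis
    using assms centralizer_mult by blast
qed

lemma centralizer_mult_subset_centralizer_pow:
  assumes "a \<in> carrier G" "y \<in> carrier G" "a \<otimes> y = y \<otimes> a" "y [^] n \<in> center G"
  shows "centralizer G (a \<otimes> y) \<subseteq> centralizer G (a [^] (n::nat))"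
proof -
  have "centralizer G (a \<otimes> y) \<subseteq> centralizer G ((a \<otimes> y) [^] n)"
    using assms(1,2) centralizer_pow by simp
  also have "(a \<otimes> y) [^] n = a [^] n \<otimes> y [^] n"
    using assms(1-3) pow_mult_distrib by simp
  also have "centralizer G \<dots> = centralizer G (a [^] n)"
    using assms(1,4) centralizer_mult_center by simp
  finally show ?thesis .
qed

section \<open>Groups of odd order\<close>

lemma mem_subgroup_of_square:
  assumes "odd (order G)" "subgroup H G" "x \<in> carrier G" "x \<otimes> x \<in> H"
  shows "x \<in> H"
proof -
  have "odd (ord x)"
    using assms(1) ord_dvd_group_order[OF assms(3)] dvd_trans by blast
  then have "2 * ((ord x + 1) div 2) = ord x + 1"
    by presburger
  then have "x [^] (ord x + 1) = (x \<otimes> x) [^] ((ord x + 1) div 2)"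
    using assms(3) nat_pow_pow[of x 2] by (simp add: numeral_2_eq_2)
  moreover have "x [^] (ord x + 1) = x"
    using assms(3) by (simp add: nat_pow_mult[symmetric])
  moreover have "(x \<otimes> x) [^] ((ord x + 1) div 2) \<in> H"
    using submonoid_nat_pow_closed[OF subgroup.subgroup_is_submonoid[OF assms(2)] assms(4)] .
  ultimately show ?thesis
    by simp
qed

lemma finite_carrier_of_odd_order: "odd (order G) \<Longrightarrow> finite (carrier G)"
  by (metis card.infinite even_zero order_def)

lemma card_rcos_Un_rcos_inv:
  assumes "odd (order G)" "subgroup H G" "S \<subseteq> H" "y \<in> carrier G - H"
  shows "card ((S #> y) \<union> (S #> inv y)) = 2 * card S"
proof -
  have S: "S \<subseteq> carrier G" and y: "y \<in> carrier G"
    using assms(2-4) subgroup.subset by auto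
  have "(S #> y) \<inter> (S #> inv y) = {}"
  proof (rule ccontr)
    assume "(S #> y) \<inter> (S #> inv y) \<noteq> {}"
    then obtain a b where ab: "a \<in> S" "b \<in> S" "a \<otimes> y = b \<otimes> inv y"
      by (auto simp: r_coset_def)
    have a: "a \<in> carrier G" "b \<in> carrier G"
      using S ab(1,2) by auto
    have "a \<otimes> y \<otimes> y = b \<otimes> inv y \<otimes> y"
      using ab(3) by simp
    then have "b = a \<otimes> (y \<otimes> y)"
      using a y by (simp add: m_assoc)
    then have "y \<otimes> y = inv a \<otimes> b"
      using a y by (simp add: inv_solve_left)
    then have "y \<otimes> y \<in> H"
      using ab(1,2) assms(2,3) subgroup.m_closed subgroup.m_inv_closed by fastforce
    then show False
      using mem_subgroup_of_square[OF assms(1,2)] assms(4) by blast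
  qed
  moreover have "card (S #> y) = card S" "card (S #> inv y) = card S"
    using card_rcosets_equal[OF rcosetsI[OF S y] S] card_rcosets_equal[OF rcosetsI[OF S inv_closed[OF y]] S]
    by simp_all
  moreover have "finite (S #> y)" "finite (S #> inv y)"
    using finite_subset[OF _ finite_carrier_of_odd_order[OF assms(1)]] r_coset_subset_G[OF S] y
    by simp_all
  ultimately show ?thesis
    by (simp add: card_Un_disjoint)
qed

section \<open>Subgroups of prime exponent modulo a subgroup\<close>

lemma inv_eq_pow_ord:
  assumes "finite (carrier G)" "x \<in> carrier G"
  shows "inv x = x [^] (ord x - 1)"
proof (rule inv_equality)
  have "x [^] (ord x - 1) \<otimes> x = x [^] (ord x - 1 + 1)"
    using assms(2) by (simp add: nat_pow_mult[symmetric])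
  also have "\<dots> = \<one>"
    using ord_ge_1[OF assms] assms(2) by simp
  finally show "x [^] (ord x - 1) \<otimes> x = \<one>" .
qed (use assms(2) in simp_all)

lemma finite_submonoid_is_subgroup:
  assumes "finite (carrier G)" "submonoid H G"
  shows "subgroup H G"
proof (rule submonoid_subgroupI[OF assms(2)])
  fix a assume "a \<in> H"
  moreover have "inv a = a [^] (ord a - 1)"
    using assms(1) submonoid.mem_carrier[OF assms(2) \<open>a \<in> H\<close>] by (rule inv_eq_pow_ord)
  ultimately show "inv a \<in> H"
    using submonoid_nat_pow_closed[OF assms(2)] by simp
qed

lemma mem_subgroup_of_coprime_pows:
  fixes d p :: nat
  assumes "subgroup H G" "a \<in> carrier G" "a [^] d \<in> H" "a [^] p \<in> H" "coprime d p"
  shows "a \<in> H"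
proof -
  obtain u v :: int where uv: "u * int d + v * int p = 1"
    using bezout_int[of "int d" "int p"] assms(5) by (auto simp: coprime_iff_gcd_eq_1)
  have "a = a [^] (int d * u + int p * v)"
    using uv assms(2) by (simp add: mult.commute)
  also have "\<dots> = (a [^] int d) [^] u \<otimes> (a [^] int p) [^] v"
    using assms(2) by (simp add: int_pow_mult int_pow_pow)
  also have "\<dots> \<in> H"
    by (rule subgroup.m_closed[OF assms(1)]; rule subgroup_int_pow_closed[OF assms(1)])
      (simp_all add: int_pow_int assms(3,4))
  finally show ?thesis .
qed

lemma pow_eq_pow_div_mult_pow_mod:
  "a \<in> carrier G \<Longrightarrow> a [^] k = (a [^] p) [^] (k div p) \<otimes> a [^] (k mod p)" for k p :: nat
  by (simp add: nat_pow_pow nat_pow_mult)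

context
  fixes H a and p :: nat
  assumes subgroup_H: "subgroup H G" and prime_p: "Factorial_Ring.prime p"
    and a: "a \<in> carrier G" "a \<notin> H" "a [^] p \<in> H"
    and commute_a: "\<And>h. h \<in> H \<Longrightarrow> h \<otimes> a = a \<otimes> h"
begin

lemma adjoin_root_eqD:
  assumes "h \<in> H" "h' \<in> H" "h \<otimes> a [^] i = h' \<otimes> a [^] j" "i \<le> j" "j < p"
  shows "i = j"
proof (rule ccontr)
  assume "i \<noteq> j"
  have hc: "h \<in> carrier G" "h' \<in> carrier G"
    using assms(1,2) subgroup.mem_carrier[OF subgroup_H] by auto
  have "h \<otimes> a [^] i = h' \<otimes> a [^] (j - i) \<otimes> a [^] i"
    using assms(3,4) hc a(1) by (simp add: m_assoc nat_pow_mult)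
  then have "h = h' \<otimes> a [^] (j - i)"
    using hc a(1) by (simp add: right_cancel)
  then have "a [^] (j - i) = inv h' \<otimes> h"
    using hc a(1) by (simp add: inv_solve_left)
  then have "a [^] (j - i) \<in> H"
    using assms(1,2) subgroup_H subgroup.m_closed subgroup.m_inv_closed by fastforce
  moreover have "coprime (j - i) p"
    using prime_p \<open>i \<noteq> j\<close> assms(4,5) prime_imp_coprime[of p "j - i"]
    by (simp add: coprime_commute nat_dvd_not_less)
  ultimately show False
    using mem_subgroup_of_coprime_pows[OF subgroup_H a(1) _ a(3)] a(2) by blast
qed

lemma inj_on_adjoin_root: "inj_on (\<lambda>(h, k). h \<otimes> a [^] k) (H \<times> {..<p})"
proof (rule inj_onI, clarify)
  fix h k h' k' assume hk: "h \<in> H" "h' \<in> H" "k < p" "k' < p" "h \<otimes> a [^] k = h' \<otimes> a [^] k'"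
  then have "k = k'"
    using adjoin_root_eqD[of h h' k k'] adjoin_root_eqD[of h' h k' k] by (cases "k \<le> k'") auto
  then show "h = h' \<and> k = k'"
    using hk subgroup.mem_carrier[OF subgroup_H] a(1) by (simp add: right_cancel)
qed

lemma card_adjoin_root: "card ((\<lambda>(h, k). h \<otimes> a [^] k) ` (H \<times> {..<p})) = p * card H"
  using card_image[OF inj_on_adjoin_root] by (simp add: card_cartesian_product)

lemma subgroup_adjoin_root:
  assumes "finite (carrier G)"
  shows "subgroup ((\<lambda>(h, k). h \<otimes> a [^] k) ` (H \<times> {..<p})) G"
proof (rule finite_submonoid_is_subgroup[OF assms], unfold_locales)
  let ?K = "(\<lambda>(h, k). h \<otimes> a [^] k) ` (H \<times> {..<p})"
  have p: "0 < p"
    using prime_p prime_gt_0_nat by blast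
  show "?K \<subseteq> carrier G"
    using a(1) subgroup.mem_carrier[OF subgroup_H] by auto
  show "\<one> \<in> ?K"
    using p subgroup.one_closed[OF subgroup_H] by (auto intro!: image_eqI[of _ _ "(\<one>, 0)"])
  fix x y assume "x \<in> ?K" "y \<in> ?K"
  then obtain h h' and i j :: nat where x: "x = h \<otimes> a [^] i" "h \<in> H"
    and y: "y = h' \<otimes> a [^] j" "h' \<in> H"
    by auto
  have hc: "h \<in> carrier G" "h' \<in> carrier G"
    using x(2) y(2) subgroup.mem_carrier[OF subgroup_H] by auto
  have commute: "a [^] i \<otimes> h' = h' \<otimes> a [^] i"
    using group_commutes_pow[of a h' i] commute_a[OF y(2)] a(1) hc by simp
  have "x \<otimes> y = h \<otimes> (a [^] i \<otimes> h') \<otimes> a [^] j"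
    using x(1) y(1) hc a(1) by (simp add: m_assoc)
  also have "\<dots> = h \<otimes> (h' \<otimes> a [^] i) \<otimes> a [^] j"
    by (simp only: commute)
  also have "\<dots> = h \<otimes> h' \<otimes> a [^] (i + j)"
    using hc a(1) by (simp add: m_assoc nat_pow_mult)
  also have "\<dots> = h \<otimes> h' \<otimes> (a [^] p) [^] ((i + j) div p) \<otimes> a [^] ((i + j) mod p)"
    using hc a(1) pow_eq_pow_div_mult_pow_mod[OF a(1), of "i + j" p] by (simp add: m_assoc)
  finally show "x \<otimes> y \<in> ?K"
    using x(2) y(2) a(3) p subgroup_H submonoid_nat_pow_closed[OF subgroup.subgroup_is_submonoid]
      subgroup.m_closed by fastforce
qed


lemma subset_adjoin_root: "H \<subseteq> (\<lambda>(h, k). h \<otimes> a [^] k) ` (H \<times> {..<p})"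
proof
  fix h assume h: "h \<in> H"
  then have "(h, 0) \<in> H \<times> {..<p}"
    using prime_gt_0_nat[OF prime_p] by simp
  then have "h \<otimes> a [^] (0::nat) \<in> (\<lambda>(h, k). h \<otimes> a [^] k) ` (H \<times> {..<p})"
    by (rule rev_image_eqI) simp
  then show "h \<in> (\<lambda>(h, k). h \<otimes> a [^] k) ` (H \<times> {..<p})"
    using h subgroup.mem_carrier[OF subgroup_H] by simp
qed

lemma adjoin_root_subset:
  assumes "subgroup A G" "H \<subseteq> A" "a \<in> A"
  shows "(\<lambda>(h, k). h \<otimes> a [^] k) ` (H \<times> {..<p}) \<subseteq> A"
proof (clarsimp)
  fix h and k :: nat assume "h \<in> H"
  then show "h \<otimes> a [^] k \<in> A"
    using assms submonoid_nat_pow_closed[OF subgroup.subgroup_is_submonoid[OF assms(1)]]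
      subgroup.m_closed[OF assms(1)] by blast
qed

end

lemma exists_subgroup_extension:
  fixes p :: nat
  assumes fin: "finite (carrier G)" and p: "Factorial_Ring.prime p" and A: "subgroup A G"
    and A_comm: "\<And>a b. a \<in> A \<Longrightarrow> b \<in> A \<Longrightarrow> a \<otimes> b = b \<otimes> a"
    and H: "subgroup H G" "H \<subseteq> A" and a: "a \<in> A" "a \<notin> H" "a [^] p \<in> H"
  shows "\<exists>K. subgroup K G \<and> H \<subseteq> K \<and> K \<subseteq> A \<and> card K = p * card H"
proof (intro exI conjI)
  have a_carrier: "a \<in> carrier G"
    using subgroup.mem_carrier[OF A a(1)] .
  have commute_a: "h \<otimes> a = a \<otimes> h" if "h \<in> H" for h
    using that H(2) a(1) by (intro A_comm) auto
  note adjoin = H(1) p a_carrier a(2,3) commute_a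
  show "subgroup ((\<lambda>(h, k). h \<otimes> a [^] k) ` (H \<times> {..<p})) G"
    using subgroup_adjoin_root[OF adjoin fin] .
  show "H \<subseteq> (\<lambda>(h, k). h \<otimes> a [^] k) ` (H \<times> {..<p})"
    using subset_adjoin_root[OF adjoin] .
  show "(\<lambda>(h, k). h \<otimes> a [^] k) ` (H \<times> {..<p}) \<subseteq> A"
    using adjoin_root_subset[OF adjoin A H(2) a(1)] .
  show "card ((\<lambda>(h, k). h \<otimes> a [^] k) ` (H \<times> {..<p})) = p * card H"
    using card_adjoin_root[OF adjoin] .
qed

lemma card_eq_prime_pow_mult_card:
  fixes p :: nat
  assumes fin: "finite (carrier G)" and p: "Factorial_Ring.prime p" and A: "subgroup A G"
    and A_comm: "\<And>a b. a \<in> A \<Longrightarrow> b \<in> A \<Longrightarrow> a \<otimes> b = b \<otimes> a"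
    and "subgroup H G" "H \<subseteq> A" "\<And>a. a \<in> A \<Longrightarrow> a [^] p \<in> H"
  shows "\<exists>s. card A = p ^ s * card H"
  using assms(5-7)
proof (induction "card A - card H" arbitrary: H rule: less_induct)
  case less
  show ?case
  proof (cases "A \<subseteq> H")
    case True
    then show ?thesis
      using less.prems(2) by (intro exI[of _ 0]) simp
  next
    case False
    then obtain a where a: "a \<in> A" "a \<notin> H"
      by blast
    obtain K where K: "subgroup K G" "H \<subseteq> K" "K \<subseteq> A" "card K = p * card H"
      using exists_subgroup_extension[OF fin p A A_comm less.prems(1,2) a less.prems(3)[OF a(1)]] by blast
    have "card H < card K"
      using K(4) prime_gt_1_nat[OF p] subgroup.finite_imp_card_positive[OF less.prems(1) fin] by simp
    moreover have "card K \<le> card A"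
      using card_mono[OF finite_subset[OF subgroup.subset[OF A] fin] K(3)] .
    ultimately have "card A - card K < card A - card H"
      by linarith
    then obtain s where "card A = p ^ s * card K"
      using less.hyps K(1-3) less.prems(3) by blast
    then have "card A = p ^ Suc s * card H"
      using K(4) by simp
    then show ?thesis ..
  qed
qed

lemma exists_pow_not_mem_prime_pow_mem:
  assumes "finite (carrier G)" "subgroup H G" "y \<in> carrier G" "y \<notin> H"
  shows "\<exists>(q::nat) (k::nat). Factorial_Ring.prime q \<and> y [^] k \<notin> H \<and> (y [^] k) [^] q \<in> H"
proof -
  have "\<exists>n::nat. 0 < n \<and> y [^] n \<in> H"
    using ord_ge_1[OF assms(1,3)] assms(3) subgroup.one_closed[OF assms(2)] by (intro exI[of _ "ord y"]) simp
  then obtain n :: nat where n: "0 < n" "y [^] n \<in> H"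
    and least: "\<And>k. 0 < k \<Longrightarrow> k < n \<Longrightarrow> y [^] k \<notin> H"
    by (auto simp: exists_least_iff[where P = "\<lambda>n. 0 < n \<and> y [^] n \<in> H"])
  have "n \<noteq> 1"
    using n(2) assms(3,4) by auto
  then obtain q where q: "Factorial_Ring.prime q" "q dvd n"
    using prime_factor_nat by blast
  have "0 < n div q" "n div q < n"
    using q n(1) prime_gt_1_nat[OF q(1)] by (auto simp: dvd_div_eq_0_iff)
  moreover have "(y [^] (n div q)) [^] q = y [^] n"
    using q(2) assms(3) by (simp add: nat_pow_pow)
  ultimately show ?thesis
    using q(1) n(2) least by (intro exI[of _ q] exI[of _ "n div q"]) simp
qed

lemma card_pow_mem_le_card_pow_not_mem:
  fixes n :: nat
  assumes "finite (carrier G)" "subgroup H G" "subgroup K G"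
    and K_comm: "\<And>a b. a \<in> K \<Longrightarrow> b \<in> K \<Longrightarrow> a \<otimes> b = b \<otimes> a"
    and a0: "a0 \<in> K" "a0 [^] n \<notin> H"
  shows "card {a \<in> K. a [^] n \<in> H} \<le> card {a \<in> K. a [^] n \<notin> H}"
proof -
  have a0_carrier: "a0 \<in> carrier G"
    using subgroup.mem_carrier[OF assms(3) a0(1)] .
  have "a0 \<otimes> a \<in> {a \<in> K. a [^] n \<notin> H}" if "a \<in> {a \<in> K. a [^] n \<in> H}" for a
  proof -
    have a: "a \<in> K" "a [^] n \<in> H"
      using that by simp_all
    have a_carrier: "a \<in> carrier G"
      using subgroup.mem_carrier[OF assms(3) a(1)] .
    have "(a0 \<otimes> a) [^] n \<notin> H"
    proof
      assume "(a0 \<otimes> a) [^] n \<in> H"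
      moreover have "(a0 \<otimes> a) [^] n = a0 [^] n \<otimes> a [^] n"
        using pow_mult_distrib[OF K_comm[OF a0(1) a(1)] a0_carrier a_carrier] .
      ultimately have "a0 [^] n \<otimes> a [^] n \<otimes> inv (a [^] n) \<in> H"
        using a(2) assms(2) subgroup.m_closed subgroup.m_inv_closed by fastforce
      then show False
        using a0(2) a0_carrier a_carrier by (simp add: m_assoc)
    qed
    then show ?thesis
      using a0(1) a(1) subgroup.m_closed[OF assms(3)] by blast
  qed
  then have "(\<lambda>a. a0 \<otimes> a) ` {a \<in> K. a [^] n \<in> H} \<subseteq> {a \<in> K. a [^] n \<notin> H}"
    by (rule image_subsetI)
  moreover have "inj_on (\<lambda>a. a0 \<otimes> a) {a \<in> K. a [^] n \<in> H}"
    by (rule inj_on_subset[OF inj_on_cmult[OF a0_carrier]]) (use subgroup.subset[OF assms(3)] in blast)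
  moreover have "finite {a \<in> K. a [^] n \<notin> H}"
    by (rule finite_subset[OF _ assms(1)]) (use subgroup.subset[OF assms(3)] in blast)
  ultimately show ?thesis
    using card_inj_on_le by blast
qed

end

section \<open>Maximal centralizers\<close>

definition center_centralizer :: "('a, 'b) monoid_scheme \<Rightarrow> 'a \<Rightarrow> 'a set" where
  "center_centralizer G x = center (G\<lparr>carrier := centralizer G x\<rparr>)"

definition maximal_centralizer :: "('a, 'b) monoid_scheme \<Rightarrow> 'a \<Rightarrow> bool" where
  "maximal_centralizer G m \<longleftrightarrow> m \<in> carrier G - center G \<and>
     (\<forall>y \<in> carrier G - center G. centralizer G m \<subseteq> centralizer G y \<longrightarrow> centralizer G y = centralizer G m)"

context group
begin

lemma mem_center_centralizer_iff:
  assumes "x \<in> carrier G"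
  shows "a \<in> center_centralizer G x \<longleftrightarrow> a \<in> carrier G \<and> centralizer G x \<subseteq> centralizer G a"
proof -
  have "center_centralizer G x = {a \<in> centralizer G x. \<forall>u \<in> centralizer G x. a \<otimes> u = u \<otimes> a}"
    by (simp add: center_centralizer_def center_def)
  then show ?thesis
    using assms mem_centralizer_self[OF assms] by (auto simp: centralizer_def)
qed

lemma center_centralizer_subset_centralizer: "center_centralizer G x \<subseteq> centralizer G x"
  by (auto simp: center_centralizer_def center_def)

lemma center_subset_center_centralizer:
  "x \<in> carrier G \<Longrightarrow> center G \<subseteq> center_centralizer G x"
  using centralizer_subset by (auto simp: mem_center_centralizer_iff mem_center_iff)

lemma mem_center_centralizer_self: "x \<in> carrier G \<Longrightarrow> x \<in> center_centralizer G x"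
  by (simp add: mem_center_centralizer_iff)

lemma subgroup_center_centralizer:
  assumes "x \<in> carrier G"
  shows "subgroup (center_centralizer G x) G"
proof (rule subgroupI)
  fix a b assume "a \<in> center_centralizer G x" "b \<in> center_centralizer G x"
  then show "a \<otimes> b \<in> center_centralizer G x"
    using assms centralizer_mult[of a b] by (auto simp: mem_center_centralizer_iff)
next
  fix a assume "a \<in> center_centralizer G x"
  then show "inv a \<in> center_centralizer G x"
    using assms by (simp add: mem_center_centralizer_iff centralizer_inv)
qed (use assms mem_center_centralizer_self in \<open>auto simp: mem_center_centralizer_iff\<close>)

lemma center_centralizer_commute:
  assumes "x \<in> carrier G" "a \<in> center_centralizer G x" "b \<in> center_centralizer G x"
  shows "a \<otimes> b = b \<otimes> a"
proof -
  have "b \<in> centralizer G x" "centralizer G x \<subseteq> centralizer G a"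
    using assms center_centralizer_subset_centralizer mem_center_centralizer_iff by blast+
  then have "b \<in> centralizer G a"
    by blast
  then show ?thesis
    by (rule mem_centralizer_commute)
qed

lemma centralizer_eq_of_maximal_centralizer:
  assumes "maximal_centralizer G m" "y \<in> carrier G - center G" "centralizer G m \<subseteq> centralizer G y"
  shows "centralizer G y = centralizer G m"
  using assms by (simp add: maximal_centralizer_def)

lemma centralizer_eq_of_mem_center_centralizer:
  assumes "maximal_centralizer G m" "a \<in> center_centralizer G m - center G"
  shows "centralizer G a = centralizer G m"
proof -
  have "a \<in> carrier G" "centralizer G m \<subseteq> centralizer G a"
    using assms mem_center_centralizer_iff by (auto simp: maximal_centralizer_def)
  then show ?thesis
    using centralizer_eq_of_maximal_centralizer[OF assms(1)] assms(2) by blast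
qed

lemma beta_maximal_centralizer:
  assumes "maximal_centralizer G m"
  shows "beta G m = center_centralizer G m - center G"
proof (intro equalityI subsetI)
  have m: "m \<in> carrier G" "centralizer G m \<noteq> carrier G"
    using assms by (auto simp: maximal_centralizer_def mem_center_iff)
  fix y
  assume "y \<in> beta G m"
  then have "y \<in> carrier G" "centralizer G y = centralizer G m"
    by (auto simp: beta_def)
  then show "y \<in> center_centralizer G m - center G"
    using m by (simp add: mem_center_centralizer_iff mem_center_iff)
next
  fix a
  assume a: "a \<in> center_centralizer G m - center G"
  then have "a \<in> carrier G"
    using center_centralizer_subset_centralizer centralizer_subset by blast
  with centralizer_eq_of_mem_center_centralizer[OF assms a] show "a \<in> beta G m"
    unfolding beta_def by blast
qed

lemma exists_maximal_centralizer:
  assumes "finite (carrier G)" "x \<in> carrier G - center G"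
  shows "\<exists>m. maximal_centralizer G m \<and> centralizer G x \<subseteq> centralizer G m"
proof -
  have "finite (centralizer G ` (carrier G - center G))"
    using assms(1) by simp
  from finite_has_maximal2[OF this imageI[OF assms(2)]]
  obtain M where M: "M \<in> centralizer G ` (carrier G - center G)" "centralizer G x \<subseteq> M"
    and max: "\<forall>N \<in> centralizer G ` (carrier G - center G). M \<subseteq> N \<longrightarrow> M = N"
    by auto
  then obtain m where m: "m \<in> carrier G - center G" "M = centralizer G m"
    by blast
  with max have "maximal_centralizer G m"
    by (auto simp: maximal_centralizer_def)
  then show ?thesis
    using M(2) m(2) by blast
qed

lemma centralizer_mult_eq_inter:
  fixes n :: nat
  assumes m: "maximal_centralizer G m" and a: "a \<in> center_centralizer G m" "a [^] n \<notin> center G"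
    and y: "y \<in> centralizer G m" "y [^] n \<in> center G"
  shows "centralizer G (a \<otimes> y) = centralizer G m \<inter> centralizer G y"
proof -
  have carrier: "m \<in> carrier G" "a \<in> carrier G" "y \<in> carrier G"
    using m a(1) y(1) centralizer_subset by (auto simp: maximal_centralizer_def mem_center_centralizer_iff)
  have m_a: "centralizer G m \<subseteq> centralizer G a"
    using a(1) carrier(1) by (simp add: mem_center_centralizer_iff)
  then have "y \<in> centralizer G a"
    using y(1) by blast
  then have "a \<otimes> y = y \<otimes> a"
    by (rule mem_centralizer_commute)
  then have "centralizer G (a \<otimes> y) \<subseteq> centralizer G (a [^] n)"
    using carrier y(2) by (intro centralizer_mult_subset_centralizer_pow)
  also have "centralizer G (a [^] n) = centralizer G m"
    using centralizer_eq_of_mem_center_centralizer[OF m] a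
      subgroup_center_centralizer[OF carrier(1)] submonoid_nat_pow_closed subgroup.subgroup_is_submonoid
    by blast
  finally show ?thesis
    using centralizer_mult_inter[OF carrier(2,3)] m_a by blast
qed

lemma centralizer_mult_eq_of_pow:
  fixes p :: nat
  assumes m: "m \<in> carrier G" and g: "g \<in> carrier G" "centralizer G (g [^] p) \<subseteq> centralizer G m"
    and a: "a \<in> center_centralizer G m" "a [^] p \<in> center G"
  shows "centralizer G (a \<otimes> g) = centralizer G g"
proof -
  have a_carrier: "a \<in> carrier G" and m_a: "centralizer G m \<subseteq> centralizer G a"
    using a(1) m by (auto simp: mem_center_centralizer_iff)
  have g_a: "centralizer G g \<subseteq> centralizer G a"
    using centralizer_pow[OF g(1), of p] g(2) m_a by blast
  then have "g \<in> centralizer G a"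
    using mem_centralizer_self[OF g(1)] by blast
  then have commute: "a \<otimes> g = g \<otimes> a"
    by (rule mem_centralizer_commute)
  have "centralizer G (g \<otimes> a) \<subseteq> centralizer G (g [^] p)"
    by (rule centralizer_mult_subset_centralizer_pow[OF g(1) a_carrier commute[symmetric] a(2)])
  then have "centralizer G (a \<otimes> g) \<subseteq> centralizer G (g [^] p)"
    using commute by simp
  then have "centralizer G (a \<otimes> g) \<subseteq> centralizer G a"
    using g(2) m_a by blast
  then show ?thesis
    using centralizer_mult_inter[OF a_carrier g(1)] g_a by blast
qed

lemma rcos_subset_beta_of_pow_not_mem_center:
  fixes n :: nat
  assumes m: "maximal_centralizer G m" and y: "y \<in> centralizer G m" "y [^] n \<in> center G"
    and a: "a \<in> center_centralizer G m" "a [^] n \<notin> center G"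
  defines "S \<equiv> {b \<in> center_centralizer G m. b [^] n \<notin> center G}"
  shows "(S #> y) \<union> (S #> inv y) \<subseteq> beta G (a \<otimes> y)"
proof -
  have m_carrier: "m \<in> carrier G" and y_carrier: "y \<in> carrier G"
    using m y(1) centralizer_subset by (auto simp: maximal_centralizer_def)
  have inv_y: "inv y \<in> centralizer G m" "inv y [^] n \<in> center G"
    using y subgroup.m_inv_closed[OF subgroup_centralizer[OF m_carrier]]
      subgroup.m_inv_closed[OF subgroup_center] nat_pow_inv[OF y_carrier]
    by auto
  have b_carrier: "b \<in> carrier G" if "b \<in> S" for b
    using that m_carrier by (simp add: S_def mem_center_centralizer_iff)
  have "centralizer G (b \<otimes> y) = centralizer G m \<inter> centralizer G y"
    "centralizer G (b \<otimes> inv y) = centralizer G m \<inter> centralizer G y" if "b \<in> S" for b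
    using centralizer_mult_eq_inter[OF m _ _ y] centralizer_mult_eq_inter[OF m _ _ inv_y]
      centralizer_inv[OF y_carrier] that by (simp_all add: S_def)
  moreover have "a \<in> S"
    using a by (simp add: S_def)
  ultimately have "b \<otimes> y \<in> beta G (a \<otimes> y)" "b \<otimes> inv y \<in> beta G (a \<otimes> y)" if "b \<in> S" for b
    unfolding beta_def using that b_carrier y_carrier by simp_all
  then show ?thesis
    unfolding r_coset_def by blast
qed

lemma rcos_subset_beta_of_pow_mem_center:
  fixes p :: nat
  assumes m: "m \<in> carrier G" and g: "g \<in> carrier G" "centralizer G (g [^] p) \<subseteq> centralizer G m"
    and exponent: "\<forall>a \<in> center_centralizer G m. a [^] p \<in> center G"
  shows "(center_centralizer G m #> g) \<union> (center_centralizer G m #> inv g) \<subseteq> beta G g"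
proof -
  have inv_g: "centralizer G (inv g [^] p) \<subseteq> centralizer G m"
    using g by (simp add: nat_pow_inv centralizer_inv)
  have "a \<otimes> g \<in> beta G g" "a \<otimes> inv g \<in> beta G g" if "a \<in> center_centralizer G m" for a
    unfolding beta_def
    using centralizer_mult_eq_of_pow[OF m g that] centralizer_mult_eq_of_pow[OF m _ inv_g that]
      exponent that g centralizer_inv[OF g(1)] m by (simp_all add: mem_center_centralizer_iff)
  then show ?thesis
    unfolding r_coset_def by blast
qed

lemma rcos_subset_beta_of_maximal:
  assumes m: "m \<in> carrier G" and y: "y \<in> centralizer G m - center_centralizer G m"
    "centralizer G y \<subseteq> centralizer G m"
    and y_max: "\<And>w. w \<in> centralizer G m - center_centralizer G m \<Longrightarrow>
      centralizer G y \<subseteq> centralizer G w \<Longrightarrow> centralizer G w = centralizer G y"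
  shows "center_centralizer G m #> y \<subseteq> beta G y"
proof
  let ?Z = "center_centralizer G m"
  fix w assume "w \<in> ?Z #> y"
  then obtain a where a: "a \<in> ?Z" and w: "w = a \<otimes> y"
    by (auto simp: r_coset_def)
  have a_carrier: "a \<in> carrier G" and m_a: "centralizer G m \<subseteq> centralizer G a"
    using a m by (auto simp: mem_center_centralizer_iff)
  have y_carrier: "y \<in> carrier G"
    using y(1) centralizer_subset by blast
  have "w \<in> centralizer G m"
    using w a y(1) center_centralizer_subset_centralizer subgroup.m_closed[OF subgroup_centralizer[OF m]]
    by blast
  moreover have "w \<notin> ?Z"
  proof
    assume "w \<in> ?Z"
    then have "inv a \<otimes> w \<in> ?Z"
      using a subgroup_center_centralizer[OF m] subgroup.m_closed subgroup.m_inv_closed by fastforce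
    then show False
      using w y(1) a_carrier y_carrier by (simp add: m_assoc[symmetric])
  qed
  moreover have "centralizer G y \<subseteq> centralizer G w"
    using w centralizer_mult[OF a_carrier y_carrier] y(2) m_a by blast
  ultimately have "centralizer G w = centralizer G y"
    using y_max by blast
  then show "w \<in> beta G y"
    using w a_carrier y_carrier by (simp add: beta_def)
qed

end

section \<open>Groups whose beta-classes of non-central elements have equal size\<close>

locale beta_regular_group = group +
  assumes finite_carrier: "finite (carrier G)"
    and card_beta_eq: "x \<in> carrier G - center G \<Longrightarrow> y \<in> carrier G - center G \<Longrightarrow>
      card (beta G x) = card (beta G y)"
begin

lemma card_center_pos: "0 < card (center G)"
  using subgroup.finite_imp_card_positive[OF subgroup_center finite_carrier] .

lemma finite_beta: "finite (beta G x)"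
  by (rule finite_subset[OF _ finite_carrier]) (auto simp: beta_def)

lemma card_beta_add_card_center:
  assumes m: "maximal_centralizer G m" and x: "x \<in> carrier G - center G"
  shows "card (beta G x) + card (center G) = card (center_centralizer G m)"
proof -
  have m_carrier: "m \<in> carrier G - center G"
    using m by (simp add: maximal_centralizer_def)
  have "finite (center_centralizer G m)"
    using finite_subset[OF subgroup.subset[OF subgroup_center_centralizer] finite_carrier] m_carrier
    by blast
  then have "card (center_centralizer G m - center G) + card (center G) = card (center_centralizer G m)"
    using center_subset_center_centralizer m_carrier card_Diff_subset[of "center G"] finite_subset
    by (metis DiffD1 le_add_diff_inverse2 card_mono)
  then show ?thesis
    using card_beta_eq[OF x m_carrier] beta_maximal_centralizer[OF m] by simp
qed

lemma card_add_card_center_le: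
  assumes "maximal_centralizer G m" "w \<in> carrier G - center G" "T \<subseteq> beta G w"
  shows "card T + card (center G) \<le> card (center_centralizer G m)"
  using card_mono[OF finite_beta assms(3)] card_beta_add_card_center[OF assms(1,2)] by linarith

lemma exists_centralizer_not_subset:
  assumes m: "maximal_centralizer G m" and beta_m: "centralizer G m \<noteq> beta G m \<union> center G"
  shows "\<exists>y \<in> centralizer G m - center G. \<not> centralizer G y \<subseteq> centralizer G m"
proof (rule ccontr)
  assume "\<not> ?thesis"
  then have TI: "\<And>y. y \<in> centralizer G m - center G \<Longrightarrow> centralizer G y \<subseteq> centralizer G m"
    by blast
  have m_carrier: "m \<in> carrier G"
    using m by (simp add: maximal_centralizer_def)
  let ?Z = "center_centralizer G m"
  let ?S = "centralizer G m - ?Z"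
  have Z_sub: "center G \<subseteq> ?Z"
    using center_subset_center_centralizer[OF m_carrier] .
  have "beta G m \<union> center G = ?Z"
    using beta_maximal_centralizer[OF m] Z_sub by blast
  then have "?S \<noteq> {}"
    using beta_m center_centralizer_subset_centralizer by blast
  moreover have "finite (centralizer G ` ?S)"
    by (intro finite_imageI finite_Diff finite_subset[OF centralizer_subset finite_carrier])
  ultimately obtain M where M: "M \<in> centralizer G ` ?S"
    and M_max: "\<forall>N \<in> centralizer G ` ?S. M \<subseteq> N \<longrightarrow> M = N"
    using finite_has_maximal[of "centralizer G ` ?S"] by auto
  then obtain y where y: "y \<in> ?S" "M = centralizer G y"
    by blast
  have y_carrier: "y \<in> carrier G - center G"
    using y(1) Z_sub centralizer_subset by blast
  have y_m: "centralizer G y \<subseteq> centralizer G m"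
    using TI y(1) y_carrier by blast
  have y_max: "centralizer G w = centralizer G y"
    if "w \<in> ?S" "centralizer G y \<subseteq> centralizer G w" for w
    using M_max y(2) that by blast
  have "card (?Z #> y) + card (center G) \<le> card ?Z"
    using card_add_card_center_le[OF m y_carrier rcos_subset_beta_of_maximal[OF m_carrier y(1) y_m y_max]] .
  moreover have "card (?Z #> y) = card ?Z"
  proof -
    have Z: "?Z \<subseteq> carrier G" and "y \<in> carrier G"
      using subgroup.subset[OF subgroup_center_centralizer[OF m_carrier]] y_carrier by auto
    then show ?thesis
      using card_rcosets_equal[OF rcosetsI[OF Z] Z] by simp
  qed
  ultimately show False
    using card_center_pos by linarith
qed

lemma pow_mem_center_of_mem_center_centralizer:
  fixes n :: nat
  assumes odd: "odd (order G)" and m: "maximal_centralizer G m"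
    and y: "y \<in> centralizer G m - center G" "\<not> centralizer G y \<subseteq> centralizer G m"
      "y [^] n \<in> center G"
    and a: "a \<in> center_centralizer G m"
  shows "a [^] n \<in> center G"
proof (rule ccontr)
  assume a_n: "a [^] n \<notin> center G"
  let ?Z = "center_centralizer G m"
  define good where "good = {b \<in> ?Z. b [^] n \<in> center G}"
  define bad where "bad = {b \<in> ?Z. b [^] n \<notin> center G}"
  have m_carrier: "m \<in> carrier G" and y_carrier: "y \<in> carrier G" and a_carrier: "a \<in> carrier G"
    using m y(1) a centralizer_subset
    by (auto simp: maximal_centralizer_def mem_center_centralizer_iff)
  have y_m: "y \<in> centralizer G m"
    using y(1) by blast
  have "centralizer G (a \<otimes> y) \<noteq> carrier G"
    using centralizer_mult_eq_inter[OF m a a_n y_m y(3)] y(2) centralizer_subset by auto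
  then have ay: "a \<otimes> y \<in> carrier G - center G"
    using a_carrier y_carrier by (simp add: mem_center_iff)
  have "y \<notin> ?Z"
    using centralizer_eq_of_mem_center_centralizer[OF m] y(1,2) by blast
  then have "card ((bad #> y) \<union> (bad #> inv y)) = 2 * card bad"
    using card_rcos_Un_rcos_inv[OF odd subgroup_center_centralizer[OF m_carrier]] y_carrier
    by (simp add: bad_def)
  then have "2 * card bad + card (center G) \<le> card ?Z"
    using card_add_card_center_le[OF m ay rcos_subset_beta_of_pow_not_mem_center[OF m y_m y(3) a a_n]]
    by (simp add: bad_def)
  moreover have "card ?Z = card good + card bad"
  proof -
    have "?Z = good \<union> bad" "good \<inter> bad = {}"
      by (auto simp: good_def bad_def)
    moreover have "finite ?Z"
      using finite_subset[OF subgroup.subset[OF subgroup_center_centralizer[OF m_carrier]] finite_carrier] .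
    ultimately show ?thesis
      by (metis card_Un_disjoint finite_Un)
  qed
  moreover have "card good \<le> card bad"
    unfolding good_def bad_def
    using card_pow_mem_le_card_pow_not_mem[OF finite_carrier subgroup_center subgroup_center_centralizer[OF m_carrier]
        center_centralizer_commute[OF m_carrier] a a_n] .
  ultimately show False
    using card_center_pos by linarith
qed

lemma exists_prime_exponent:
  assumes odd: "odd (order G)" and m: "maximal_centralizer G m"
    and beta_m: "centralizer G m \<noteq> beta G m \<union> center G"
  shows "\<exists>p::nat. Factorial_Ring.prime p \<and> (\<forall>a \<in> center_centralizer G m. a [^] p \<in> center G)"
proof -
  obtain y where y: "y \<in> centralizer G m - center G" "\<not> centralizer G y \<subseteq> centralizer G m"
    using exists_centralizer_not_subset[OF m beta_m] by blast
  have m_carrier: "m \<in> carrier G" and y_carrier: "y \<in> carrier G"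
    using m y(1) centralizer_subset by (auto simp: maximal_centralizer_def)
  obtain q k :: nat where q: "Factorial_Ring.prime q" "y [^] k \<notin> center G" "(y [^] k) [^] q \<in> center G"
    using exists_pow_not_mem_prime_pow_mem[OF finite_carrier subgroup_center y_carrier] y(1) by blast
  have "y [^] k \<in> centralizer G m - center G"
    using q(2) y(1) submonoid_nat_pow_closed[OF subgroup.subgroup_is_submonoid[OF subgroup_centralizer[OF m_carrier]]]
    by blast
  moreover have "\<not> centralizer G (y [^] k) \<subseteq> centralizer G m"
    using y(2) centralizer_pow[OF y_carrier, of k] by blast
  ultimately show ?thesis
    using pow_mem_center_of_mem_center_centralizer[OF odd m _ _ q(3)] q(1) by blast
qed

lemma card_center_less_card_center_centralizer:
  assumes "maximal_centralizer G m"
  shows "card (center G) < card (center_centralizer G m)"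
proof -
  have "m \<in> beta G m" "m \<in> carrier G - center G"
    using assms by (auto simp: maximal_centralizer_def beta_def)
  then have "0 < card (beta G m)"
    using finite_beta card_gt_0_iff by blast
  then show ?thesis
    using card_beta_add_card_center[OF assms \<open>m \<in> carrier G - center G\<close>] by linarith
qed

lemma prime_exponent_unique:
  fixes p q :: nat
  assumes m: "maximal_centralizer G m" and m': "maximal_centralizer G m'"
    and p: "Factorial_Ring.prime p" "\<forall>a \<in> center_centralizer G m. a [^] p \<in> center G"
    and q: "Factorial_Ring.prime q" "\<forall>a \<in> center_centralizer G m'. a [^] q \<in> center G"
  shows "p = q"
proof -
  have m_carrier: "m \<in> carrier G - center G" and m'_carrier: "m' \<in> carrier G - center G"
    using m m' by (auto simp: maximal_centralizer_def)
  have "card (center_centralizer G m) = card (center_centralizer G m')"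
    using card_beta_add_card_center[OF m m_carrier] card_beta_add_card_center[OF m' m_carrier]
    by linarith
  moreover have "\<exists>s. card (center_centralizer G x) = r ^ s * card (center G)"
    if "x \<in> carrier G" "Factorial_Ring.prime r" "\<forall>a \<in> center_centralizer G x. a [^] r \<in> center G"
    for x and r :: nat
    using that
    by (intro card_eq_prime_pow_mult_card[OF finite_carrier _ subgroup_center_centralizer _ subgroup_center
          center_subset_center_centralizer])
      (auto intro: center_centralizer_commute)
  then obtain s t where s: "card (center_centralizer G m) = p ^ s * card (center G)"
    and "card (center_centralizer G m') = q ^ t * card (center G)"
    using p q m_carrier m'_carrier by (meson DiffD1)
  ultimately have "p ^ s = q ^ t"
    using card_center_pos by simp
  have "s \<noteq> 0"
    using s card_center_less_card_center_centralizer[OF m] by (cases s) auto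
  then have "p dvd p ^ s"
    by simp
  then have "p dvd q ^ t"
    using \<open>p ^ s = q ^ t\<close> by simp
  then show ?thesis
    using p(1) q(1) prime_dvd_power primes_dvd_imp_eq by blast
qed

lemma pow_mem_center_of_exponent:
  fixes p :: nat
  assumes odd: "odd (order G)"
    and exponent: "\<And>m. maximal_centralizer G m \<Longrightarrow> \<forall>a \<in> center_centralizer G m. a [^] p \<in> center G"
    and g: "g \<in> carrier G"
  shows "g [^] p \<in> center G"
proof (rule ccontr)
  assume g_p: "g [^] p \<notin> center G"
  then obtain m where m: "maximal_centralizer G m" "centralizer G (g [^] p) \<subseteq> centralizer G m"
    using exists_maximal_centralizer[OF finite_carrier] g by blast
  let ?Z = "center_centralizer G m"
  have m_carrier: "m \<in> carrier G"
    using m(1) by (simp add: maximal_centralizer_def)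
  have "g \<notin> ?Z"
    using exponent[OF m(1)] g_p by blast
  then have "card ((?Z #> g) \<union> (?Z #> inv g)) = 2 * card ?Z"
    using card_rcos_Un_rcos_inv[OF odd subgroup_center_centralizer[OF m_carrier] subset_refl] g by simp
  moreover have "g \<notin> center G"
    using g_p submonoid_nat_pow_closed[OF subgroup.subgroup_is_submonoid[OF subgroup_center]] by blast
  ultimately have "2 * card ?Z + card (center G) \<le> card ?Z"
    using card_add_card_center_le[OF m(1) _ rcos_subset_beta_of_pow_mem_center[OF m_carrier g m(2) exponent[OF m(1)]]]
      g by simp
  then show False
    using card_center_pos by linarith
qed

theorem exists_prime_pow_mem_center:
  assumes odd: "odd (order G)"
    and beta_ne: "\<forall>x \<in> carrier G. centralizer G x \<noteq> beta G x \<union> center G"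
  shows "\<exists>p::nat. Factorial_Ring.prime p \<and> (\<forall>g \<in> carrier G. g [^] p \<in> center G)"
proof -
  have "beta G \<one> \<union> center G = center G"
    by (auto simp: beta_def mem_center_iff centralizer_def)
  moreover have "centralizer G \<one> = carrier G"
    by (auto simp: centralizer_def)
  ultimately have "center G \<noteq> carrier G"
    using beta_ne by force
  then obtain x where "x \<in> carrier G - center G"
    using center_subset by blast
  then obtain m0 where m0: "maximal_centralizer G m0"
    using exists_maximal_centralizer[OF finite_carrier] by blast
  have m_carrier: "m \<in> carrier G" if "maximal_centralizer G m" for m
    using that by (simp add: maximal_centralizer_def)
  obtain p :: nat where p: "Factorial_Ring.prime p" "\<forall>a \<in> center_centralizer G m0. a [^] p \<in> center G"
    using exists_prime_exponent[OF odd m0] beta_ne m_carrier[OF m0] by blast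
  have "\<forall>a \<in> center_centralizer G m. a [^] p \<in> center G" if m: "maximal_centralizer G m" for m
  proof -
    obtain q :: nat where q: "Factorial_Ring.prime q" "\<forall>a \<in> center_centralizer G m. a [^] q \<in> center G"
      using exists_prime_exponent[OF odd m] beta_ne m_carrier[OF m] by blast
    then show ?thesis
      using prime_exponent_unique[OF m m0 q p] by simp
  qed
  then show ?thesis
    using pow_mem_center_of_exponent[OF odd] p(1) by blast
qed

end

context group
begin

lemma beta_subset_noncentral:
  assumes "x \<in> carrier G - center G"
  shows "beta G x \<subseteq> carrier G - center G"
proof
  fix y assume "y \<in> beta G x"
  then have "y \<in> carrier G" "centralizer G y = centralizer G x"
    by (simp_all add: beta_def)
  then show "y \<in> carrier G - center G"
    using assms by (simp add: mem_center_iff)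
qed

lemma induced_degree_eq:
  assumes "finite (carrier G)" "x \<in> carrier G - center G"
  shows "induced_degree G x = card (carrier G - center G) - card (beta G x)"
proof -
  have "{y \<in> carrier G - center G. nc_adj G x y} = (carrier G - center G) - beta G x"
    by (auto simp: nc_adj_def beta_def)
  then show ?thesis
    using card_Diff_subset[OF finite_subset[OF beta_subset_noncentral[OF assms(2)]] beta_subset_noncentral[OF assms(2)]]
      assms(1) by (simp add: induced_degree_def)
qed

lemma beta_regular_group_of_induced_regular:
  assumes fin: "finite (carrier G)" and "induced_regular G"
  shows "beta_regular_group G"
proof
  obtain k where k: "\<And>x. x \<in> carrier G - center G \<Longrightarrow> induced_degree G x = k"
    using assms(2) by (auto simp: induced_regular_def)
  have "card (beta G x) = card (carrier G - center G) - k" if "x \<in> carrier G - center G" for x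
    using k[OF that] induced_degree_eq[OF fin that]
      card_mono[OF _ beta_subset_noncentral[OF that]] fin by simp
  then show "card (beta G x) = card (beta G y)"
    if "x \<in> carrier G - center G" "y \<in> carrier G - center G" for x y
    using that by simp
qed (rule fin)

end

lemma (in normal) elementary_p_group_FactGroup:
  assumes p: "Factorial_Ring.prime p" and pow: "\<forall>g \<in> carrier G. g [^] p \<in> H"
  shows "elementary_p_group (G Mod H) p"
  unfolding elementary_p_group_def
proof (intro conjI ballI impI)
  interpret Q: group "G Mod H"
    by (rule factorgroup_is_group)
  fix c assume c: "c \<in> carrier (G Mod H)" "c \<noteq> \<one>\<^bsub>G Mod H\<^esub>"
  then obtain g where g: "g \<in> carrier G" "c = H #> g"
    unfolding carrier_FactGroup by blast
  have "c [^]\<^bsub>G Mod H\<^esub> p = H #> (g [^] p)"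
    using FactGroup_pow[OF g(1)] g(2) by simp
  also have "\<dots> = \<one>\<^bsub>G Mod H\<^esub>"
    using coset_join2[OF nat_pow_closed[OF g(1)] subgroup_axioms] pow g(1) by simp
  finally have "Q.ord c dvd p"
    using Q.pow_eq_id[OF c(1)] by simp
  moreover have "Q.ord c \<noteq> 1"
    using Q.ord_eq_1[OF c(1)] c(2) by simp
  ultimately show "Q.ord c = p"
    using p prime_nat_iff by blast
qed (rule p)

theorem corollary3p7:
  fixes G :: "('a, 'b) monoid_scheme"
  assumes "group G"
    and "finite (carrier G)"
    and "odd (order G)"
    and "induced_regular G"
    and "\<forall>x \<in> carrier G. centralizer G x \<noteq> beta G x \<union> center G"
  shows "\<exists>p. elementary_p_group (G Mod (center G)) p"
proof -
  interpret group G by fact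
  interpret beta_regular_group G
    using beta_regular_group_of_induced_regular assms(2,4) .
  obtain p :: nat where "Factorial_Ring.prime p" "\<forall>g \<in> carrier G. g [^]\<^bsub>G\<^esub> p \<in> center G"
    using exists_prime_pow_mem_center[OF assms(3,5)] by blast
  then show ?thesis
    using normal.elementary_p_group_FactGroup[OF normal_center] by blast
qed

end
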